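(* If all arms have the same prior mean reward, $\mathbb E[\mu_1]=\mathbb E[\mu_2]=\dots=\mathbb E[\mu_K]$, then Thompson sampling (run from the first round) is BIC.
   Context: Incentivized exploration model: $K$ arms; mean rewards $\mu_1,\dots,\mu_K\in[0,1]$ drawn independently, $\mu_i\sim\mathcal P_i$ with known priors. Rewards are Bernoulli: given the means, each arm $i$ has an i.i.d. sequence of $\{0,1\}$ samples with mean $\mu_i$, the $n$-th choice of arm $i$ reveals its $n$-th sample. In each round $t$ the algorithm recommends $A_t$, the agent chooses $A'_t$, and the reward is observed by the algorithm. With $\mathcal E_{t-1}=\{A'_s=A_s\ \forall s<t\}$, the algorithm is BIC if for all $t$ and all arms $i,j$ with $\Pr[A_t=i]>0$, $\mathbb E[\mu_i-\mu_j\mid A_t=i,\mathcal E_{t-1}]\geq0$. $A^*=\min(\arg\max_j\mu_j)$; $\mathcal F_t$ is the $\sigma$-algebra of chosen arms and rewards before round $t$. Thompson sampling recommends in round $t$ an arm $A_t$ with $\Pr[A_t=i\mid\mathcal F_t]=\Pr[A^*=i\mid\mathcal F_t]$ (a posterior sample of $A^*$). *)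

theory Defs
  imports "HOL-Probability.Probability"
begin

text \<open>Arms are 0,...,K-1. A vector of mean rewards is mu :: nat => real
  (only the values on arms below K matter).\<close>

definition best_arm :: "nat \<Rightarrow> (nat \<Rightarrow> real) \<Rightarrow> nat" where
  "best_arm K mu = (LEAST i. i < K \<and> (\<forall>j<K. mu j \<le> mu i))"

definition prior :: "nat \<Rightarrow> (nat \<Rightarrow> real measure) \<Rightarrow> (nat \<Rightarrow> real) measure" where
  "prior K P = PiM {..<K} P"

text \<open>A history is the list of (chosen arm, observed Bernoulli reward) pairs.
  Probability of observing reward r when pulling arm a with means mu.\<close>
definition reward_lik :: "(nat \<Rightarrow> real) \<Rightarrow> nat \<times> bool \<Rightarrow> real" where
  "reward_lik mu ar = (if snd ar then mu (fst ar) else 1 - mu (fst ar))"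

definition lik :: "(nat \<times> bool) list \<Rightarrow> (nat \<Rightarrow> real) \<Rightarrow> real" where
  "lik h mu = (\<Prod>ar\<leftarrow>h. reward_lik mu ar)"

definition posterior_best :: "nat \<Rightarrow> (nat \<Rightarrow> real measure) \<Rightarrow> (nat \<times> bool) list \<Rightarrow> nat \<Rightarrow> real" where
  "posterior_best K P h a =
     (\<integral>mu. (if best_arm K mu = a then lik h mu else 0) \<partial>prior K P) /
     (\<integral>mu. lik h mu \<partial>prior K P)"

text \<open>Probability, given the true means mu, that Thompson sampling (followed by
  the agents) produces exactly history h: in each round s the arm is drawn from
  the posterior of A* given the previous history, then the reward is Bernoulli.\<close>
definition ts_hist_prob :: "nat \<Rightarrow> (nat \<Rightarrow> real measure) \<Rightarrow> (nat \<Rightarrow> real) \<Rightarrow> (nat \<times> bool) list \<Rightarrow> real" where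
  "ts_hist_prob K P mu h =
     (\<Prod>s<length h. posterior_best K P (take s h) (fst (h ! s)) * reward_lik mu (h ! s))"

definition histories :: "nat \<Rightarrow> nat \<Rightarrow> (nat \<times> bool) list set" where
  "histories K n = {h. length h = n \<and> (\<forall>ar\<in>set h. fst ar < K)}"

text \<open>Pr[A_t = i | means mu] for round t = n+1 (history of length n).\<close>
definition ts_rec_prob :: "nat \<Rightarrow> (nat \<Rightarrow> real measure) \<Rightarrow> (nat \<Rightarrow> real) \<Rightarrow> nat \<Rightarrow> nat \<Rightarrow> real" where
  "ts_rec_prob K P mu n i =
     (\<Sum>h\<in>histories K n. ts_hist_prob K P mu h * posterior_best K P h i)"

text \<open>Pr[A_t = i] for round t = n+1.\<close>
definition rec_prob :: "nat \<Rightarrow> (nat \<Rightarrow> real measure) \<Rightarrow> nat \<Rightarrow> nat \<Rightarrow> real" where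
  "rec_prob K P n i = (\<integral>mu. ts_rec_prob K P mu n i \<partial>prior K P)"

text \<open>E[mu_i - mu_j | A_t = i] for round t = n+1 (elementary conditional expectation).\<close>
definition cond_gain :: "nat \<Rightarrow> (nat \<Rightarrow> real measure) \<Rightarrow> nat \<Rightarrow> nat \<Rightarrow> nat \<Rightarrow> real" where
  "cond_gain K P n i j =
     (\<integral>mu. (mu i - mu j) * ts_rec_prob K P mu n i \<partial>prior K P) / rec_prob K P n i"

text \<open>Thompson sampling is BIC (the agents having followed all earlier recommendations).\<close>
definition TS_BIC :: "nat \<Rightarrow> (nat \<Rightarrow> real measure) \<Rightarrow> bool" where
  "TS_BIC K P \<longleftrightarrow>
     (\<forall>n i j. i < K \<longrightarrow> j < K \<longrightarrow> rec_prob K P n i > 0 \<longrightarrow> cond_gain K P n i j \<ge> 0)"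

end

theory Submission
  imports Defs
begin

text \<open>Let \<open>G = mu i - mu j\<close>. The numerator of \<open>E[G | A_t = i]\<close> is a sum over the histories
  \<open>h\<close> of the first \<open>t - 1\<close> rounds of (probability that Thompson sampling makes the choices
  of \<open>h\<close>) times \<open>Pr[A* = i | h]\<close> times \<open>E[G; h]\<close>. For \<open>t = 1\<close> it is \<open>E[mu i] - E[mu j] = 0\<close>.
  It never decreases from one round to the next: once arm \<open>a\<close> is pulled after \<open>h\<close>, the
  two outcomes together contribute at least the term of \<open>h\<close>, because the indicator of
  \<open>A* = i\<close> and \<open>G\<close> are both nondecreasing in \<open>mu a\<close> (if \<open>a = i\<close>), both nonincreasing
  (if \<open>a = j\<close>), or \<open>G\<close> does not depend on \<open>mu a\<close>. Since the posterior is a product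
  measure, a function monotone in \<open>mu a\<close> is correlated with \<open>mu a\<close> accordingly
  (a conditional Chebyshev inequality), which is what the comparison of the two outcomes needs.\<close>

definition unit_cube :: "nat \<Rightarrow> (nat \<Rightarrow> real) set" where
  "unit_cube K = {mu. \<forall>k<K. 0 \<le> mu k \<and> mu k \<le> 1}"

definition valid_history :: "nat \<Rightarrow> (nat \<times> bool) list \<Rightarrow> bool" where
  "valid_history K h \<longleftrightarrow> (\<forall>ar\<in>set h. fst ar < K)"

lemma valid_history_snoc [simp]:
  "valid_history K (h @ [(a, r)]) \<longleftrightarrow> valid_history K h \<and> a < K"
  by (auto simp: valid_history_def)

lemma histories_iff: "h \<in> histories K n \<longleftrightarrow> length h = n \<and> valid_history K h"
  by (simp add: histories_def valid_history_def)

lemma sum_histories_Suc: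
  "(\<Sum>h\<in>histories K (Suc n). f h) =
    (\<Sum>h\<in>histories K n. \<Sum>a<K. f (h @ [(a, True)]) + f (h @ [(a, False)]))"
proof -
  have histories_Suc: "histories K (Suc n) = (\<lambda>(h, x). h @ [x]) ` (histories K n \<times> ({..<K} \<times> UNIV))"
    by (force simp: histories_def length_Suc_conv_rev)
  have inj: "inj_on (\<lambda>(h, x). h @ [x]) (histories K n \<times> ({..<K} \<times> (UNIV :: bool set)))"
    by (auto simp: inj_on_def)
  have "(\<Sum>h\<in>histories K (Suc n). f h) = (\<Sum>(h, a, r)\<in>histories K n \<times> ({..<K} \<times> UNIV). f (h @ [(a, r)]))"
    unfolding histories_Suc by (subst sum.reindex[OF inj]) (simp add: case_prod_beta)
  also have "\<dots> = (\<Sum>h\<in>histories K n. \<Sum>a<K. \<Sum>r\<in>UNIV. f (h @ [(a, r)]))"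
    by (simp only: sum.cartesian_product)
  finally show ?thesis
    by (simp add: UNIV_bool add.commute)
qed

lemma lik_Nil [simp]: "lik [] mu = 1"
  by (simp add: lik_def)

lemma lik_Cons: "lik (x # h) mu = reward_lik mu x * lik h mu"
  by (simp add: lik_def)

lemma lik_snoc_True: "lik (h @ [(a, True)]) mu = lik h mu * mu a"
  and lik_snoc_False: "lik (h @ [(a, False)]) mu = lik h mu * (1 - mu a)"
  by (simp_all add: lik_def reward_lik_def)

lemma lik_conv_nth: "lik h mu = (\<Prod>s<length h. reward_lik mu (h ! s))"
  unfolding lik_def by (simp add: prod.list_conv_set_nth atLeast0LessThan)

lemma lik_cong: "(\<And>ar. ar \<in> set h \<Longrightarrow> mu (fst ar) = nu (fst ar)) \<Longrightarrow> lik h mu = lik h nu"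
  by (induction h) (auto simp: lik_Cons reward_lik_def)

lemma lik_filter_split:
  "lik h mu = lik (filter (\<lambda>ar. fst ar = a) h) mu * lik (filter (\<lambda>ar. fst ar \<noteq> a) h) mu"
  by (induction h) (auto simp: lik_Cons)

lemma lik_fun_upd:
  "lik h (mu(a := y)) = lik (filter (\<lambda>ar. fst ar = a) h) (\<lambda>_. y) * lik (filter (\<lambda>ar. fst ar \<noteq> a) h) mu"
  by (subst lik_filter_split[of _ _ a]) (auto intro!: arg_cong2[where f = "(*)"] lik_cong)

lemma lik_nonneg_le_one:
  assumes "\<And>ar. ar \<in> set h \<Longrightarrow> 0 \<le> mu (fst ar) \<and> mu (fst ar) \<le> 1"
  shows "0 \<le> lik h mu \<and> lik h mu \<le> 1"
  using assms
proof (induction h)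
  case (Cons x h)
  then have "0 \<le> reward_lik mu x \<and> reward_lik mu x \<le> 1"
    by (auto simp: reward_lik_def)
  with Cons show ?case
    by (auto simp: lik_Cons intro: mult_le_one)
qed simp

lemma lik_in_unit_cube:
  "mu \<in> unit_cube K \<Longrightarrow> valid_history K h \<Longrightarrow> 0 \<le> lik h mu \<and> lik h mu \<le> 1"
  by (rule lik_nonneg_le_one) (auto simp: unit_cube_def valid_history_def)

subsection \<open>The best arm\<close>

lemma ex_maximiser:
  assumes "0 < K"
  shows "\<exists>m<K. \<forall>k<K. (mu :: nat \<Rightarrow> real) k \<le> mu m"
proof -
  have "Max (mu ` {..<K}) \<in> mu ` {..<K}"
    using assms by (intro Max_in) auto
  then obtain m where "m < K" "mu m = Max (mu ` {..<K})"
    by auto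
  then show ?thesis
    by (metis Max_ge finite_imageI finite_lessThan imageI lessThan_iff)
qed

lemma best_arm_eq_iff:
  assumes "i < K"
  shows "best_arm K mu = i \<longleftrightarrow> (\<forall>k<K. mu k \<le> mu i) \<and> (\<forall>k<i. mu k < mu i)"
proof -
  define maximiser where "maximiser m \<longleftrightarrow> m < K \<and> (\<forall>k<K. mu k \<le> mu m)" for m
  have best_arm_Least: "best_arm K mu = (LEAST m. maximiser m)"
    by (simp add: best_arm_def maximiser_def)
  obtain m0 where "maximiser m0"
    using ex_maximiser[of K mu] assms by (auto simp: maximiser_def)
  then have best: "maximiser (best_arm K mu)" and before_best: "\<And>k. k < best_arm K mu \<Longrightarrow> \<not> maximiser k"
    unfolding best_arm_Least by (auto intro: LeastI dest: not_less_Least)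
  show ?thesis
  proof
    assume "best_arm K mu = i"
    then show "(\<forall>k<K. mu k \<le> mu i) \<and> (\<forall>k<i. mu k < mu i)"
      using best before_best assms unfolding maximiser_def by (meson le_less_trans not_le order.strict_trans)
  next
    assume "(\<forall>k<K. mu k \<le> mu i) \<and> (\<forall>k<i. mu k < mu i)"
    then show "best_arm K mu = i"
      unfolding best_arm_Least maximiser_def using assms
      by (intro Least_equality) (auto simp: not_less[symmetric])
  qed
qed

lemma best_arm_less:
  assumes "0 < K"
  shows "best_arm K mu < K"
proof -
  obtain m where "m < K \<and> (\<forall>k<K. mu k \<le> mu m)"
    using ex_maximiser[OF assms] by blast
  then show ?thesis
    unfolding best_arm_def by (rule LeastI2) auto
qed

lemma best_arm_fun_upd_self_mono:
  assumes "i < K" "y \<le> y'" "best_arm K (mu(i := y)) = i"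
  shows "best_arm K (mu(i := y')) = i"
  using assms by (auto simp: best_arm_eq_iff)

lemma best_arm_fun_upd_other_antimono:
  assumes "i < K" "j \<noteq> i" "y \<le> y'" "best_arm K (mu(j := y')) = i"
  shows "best_arm K (mu(j := y)) = i"
  using assms by (auto simp: best_arm_eq_iff)

lemma mono_mult_diff_le:
  fixes f :: "real \<Rightarrow> real"
  assumes "mono f"
  shows "f m * (x - m) \<le> f x * (x - m)"
  using assms by (cases "m \<le> x") (auto intro: mult_right_mono mult_right_mono_neg monoD)

lemma ratio_mult_split_le:
  fixes b1 b0 g1 g0 z1 z0 :: real
  assumes "0 \<le> b1" "b1 \<le> z1" "0 \<le> b0" "b0 \<le> z0" "\<bar>g1\<bar> \<le> z1" "\<bar>g0\<bar> \<le> z0"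
    and same_sign: "0 \<le> (b1 * z0 - b0 * z1) * (g1 * z0 - g0 * z1)"
  shows "(b1 + b0) / (z1 + z0) * (g1 + g0) \<le> b1 / z1 * g1 + b0 / z0 * g0"
proof -
  consider "z1 = 0" | "z0 = 0" | "0 < z1" "0 < z0"
    using assms by linarith
  then show ?thesis
  proof cases
    case 3
    have "b1 / z1 * g1 + b0 / z0 * g0 - (b1 + b0) / (z1 + z0) * (g1 + g0) =
        (b1 * z0 - b0 * z1) * (g1 * z0 - g0 * z1) / (z1 * z0 * (z1 + z0))"
      using 3 by (simp add: field_simps)
    also have "\<dots> \<ge> 0"
      using 3 same_sign by simp
    finally show ?thesis
      by simp
  qed (use assms in auto)
qed

subsection \<open>Posterior integrals under a product prior\<close>

locale bandit_prior =
  fixes K :: nat and P :: "nat \<Rightarrow> real measure"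
  assumes prob_space_P: "\<And>i. i < K \<Longrightarrow> prob_space (P i)"
    and sets_P: "\<And>i. i < K \<Longrightarrow> sets (P i) = sets borel"
    and AE_P_unit: "\<And>i. i < K \<Longrightarrow> (AE x in P i. 0 \<le> x \<and> x \<le> 1)"
begin

text \<open>Padding the family with Dirac measures beyond the arms turns it into a product
  probability space over all of \<open>nat\<close>.\<close>

definition P_ext :: "nat \<Rightarrow> real measure" where
  "P_ext i = (if i < K then P i else return borel 0)"

lemma P_ext_eq: "i < K \<Longrightarrow> P_ext i = P i"
  by (simp add: P_ext_def)

lemma prob_space_P_ext: "prob_space (P_ext i)"
  unfolding P_ext_def by (auto intro: prob_space_P prob_space_return)

lemma sets_P_ext: "sets (P_ext i) = sets borel"
  unfolding P_ext_def using sets_P by auto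

lemma prior_eq_PiM_P_ext: "prior K P = PiM {..<K} P_ext"
  unfolding prior_def P_ext_def by (rule PiM_cong) auto

lemma product_prob_space_P_ext: "product_prob_space P_ext"
  unfolding product_prob_space_def product_prob_space_axioms_def product_sigma_finite_def
  using prob_space_P_ext prob_space_imp_sigma_finite by blast

lemma prob_space_prior: "prob_space (prior K P)"
  unfolding prior_eq_PiM_P_ext by (intro prob_space_PiM prob_space_P_ext)

lemma AE_prior_unit_cube: "AE mu in prior K P. mu \<in> unit_cube K"
proof -
  have coord: "AE mu in PiM {..<K} P_ext. 0 \<le> mu k \<and> mu k \<le> 1" if "k < K" for k
    using AE_P_unit[OF that, folded P_ext_eq[OF that]] that
    by (intro AE_PiM_component[where P = "\<lambda>x. 0 \<le> x \<and> x \<le> 1"] prob_space_P_ext) auto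
  have "AE mu in PiM {..<K} P_ext. \<forall>k\<in>{..<K}. 0 \<le> mu k \<and> mu k \<le> 1"
    by (intro eventually_ball_finite ballI coord) auto
  then show ?thesis
    unfolding prior_eq_PiM_P_ext unit_cube_def by (rule eventually_mono) auto
qed

lemma measurable_coord [measurable]: "k < K \<Longrightarrow> (\<lambda>mu. mu k) \<in> borel_measurable (prior K P)"
  unfolding prior_eq_PiM_P_ext
  using measurable_component_singleton[of k "{..<K}" P_ext]
  by (simp add: measurable_cong_sets[OF refl sets_P_ext])

lemma measurable_lik [measurable]:
  "valid_history K h \<Longrightarrow> lik h \<in> borel_measurable (prior K P)"
proof (induction h)
  case (Cons x h)
  then have [measurable]: "fst x < K" "lik h \<in> borel_measurable (prior K P)"
    by (auto simp: valid_history_def)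
  have "(\<lambda>mu. reward_lik mu x * lik h mu) \<in> borel_measurable (prior K P)"
    unfolding reward_lik_def by measurable
  then show ?case
    by (simp add: lik_Cons)
next
  case Nil
  have "lik [] = (\<lambda>_. 1)"
    by (rule ext) simp
  then show ?case
    by simp
qed

lemma measurable_best_arm [measurable]:
  "(\<lambda>mu. best_arm K mu) \<in> measurable (prior K P) (count_space UNIV)"
proof -
  have "Measurable.pred (prior K P) (\<lambda>mu. i < K \<and> (\<forall>j\<in>{..<K}. mu j \<le> mu i))" for i
  proof (cases "i < K")
    case True
    then show ?thesis
      by (intro pred_intros_logic pred_intros_finite)
         (auto simp: Measurable.pred_def intro!: borel_measurable_le measurable_coord)
  qed simp
  then have "(\<lambda>mu. LEAST i. i < K \<and> (\<forall>j\<in>{..<K}. mu j \<le> mu i)) \<in> measurable (prior K P) (count_space UNIV)"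
    by (rule measurable_Least)
  then show ?thesis
    unfolding Ball_def lessThan_iff best_arm_def .
qed

lemma measurable_fun_upd:
  assumes "a < K"
  shows "(\<lambda>mu. mu(a := y)) \<in> measurable (prior K P) (prior K P)"
proof -
  have space_P_ext: "space (P_ext i) = UNIV" for i
    using sets_eq_imp_space_eq[OF sets_P_ext[of i]] by simp
  have "(\<lambda>mu i. (mu(a := y)) i) \<in> measurable (PiM {..<K} P_ext) (PiM {..<K} P_ext)"
  proof (rule measurable_PiM_single')
    show "(\<lambda>mu. (mu(a := y)) i) \<in> measurable (PiM {..<K} P_ext) (P_ext i)" if "i \<in> {..<K}" for i
      using that by (cases "i = a") (simp_all add: space_P_ext)
    show "(\<lambda>mu i. (mu(a := y)) i) \<in> space (PiM {..<K} P_ext) \<rightarrow> (\<Pi>\<^sub>E i\<in>{..<K}. space (P_ext i))"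
      using assms by (auto simp: space_PiM space_P_ext PiE_def extensional_def)
  qed
  then show ?thesis
    unfolding prior_eq_PiM_P_ext fun_upd_def by simp
qed

definition unit_bounded :: "((nat \<Rightarrow> real) \<Rightarrow> real) set" where
  "unit_bounded = {f \<in> borel_measurable (prior K P). \<forall>mu\<in>unit_cube K. \<bar>f mu\<bar> \<le> 1}"

lemma unit_bounded_const: "\<bar>c\<bar> \<le> 1 \<Longrightarrow> (\<lambda>_. c) \<in> unit_bounded"
  by (simp add: unit_bounded_def)

lemma unit_bounded_coord: "a < K \<Longrightarrow> (\<lambda>mu. mu a) \<in> unit_bounded"
  by (simp add: unit_bounded_def unit_cube_def)

lemma unit_bounded_coord_diff: "i < K \<Longrightarrow> j < K \<Longrightarrow> (\<lambda>mu. mu i - mu j) \<in> unit_bounded"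
  by (auto simp: unit_bounded_def unit_cube_def abs_le_iff) (smt (verit))+

lemma unit_bounded_coord_minus_const:
  "a < K \<Longrightarrow> 0 \<le> c \<Longrightarrow> c \<le> 1 \<Longrightarrow> (\<lambda>mu. mu a - c) \<in> unit_bounded"
  by (auto simp: unit_bounded_def unit_cube_def abs_le_iff)

lemma unit_bounded_best_arm: "(\<lambda>mu. of_bool (best_arm K mu = i)) \<in> unit_bounded"
  unfolding unit_bounded_def by auto measurable

lemma unit_bounded_mult:
  "f \<in> unit_bounded \<Longrightarrow> g \<in> unit_bounded \<Longrightarrow> (\<lambda>mu. f mu * g mu) \<in> unit_bounded"
  by (auto simp: unit_bounded_def abs_mult intro: mult_le_one)

lemma unit_bounded_uminus: "f \<in> unit_bounded \<Longrightarrow> (\<lambda>mu. - f mu) \<in> unit_bounded"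
  by (simp add: unit_bounded_def)

lemma unit_bounded_fun_upd:
  assumes "F \<in> unit_bounded" "a < K" "0 \<le> y" "y \<le> 1"
  shows "(\<lambda>mu. F (mu(a := y))) \<in> unit_bounded"
  using assms measurable_compose[OF measurable_fun_upd[of a y], of F]
  by (auto simp: unit_bounded_def unit_cube_def)

lemma integrable_lik:
  assumes "f \<in> unit_bounded" "valid_history K h"
  shows "integrable (prior K P) (\<lambda>mu. f mu * lik h mu)"
proof -
  interpret prob_space "prior K P"
    by (rule prob_space_prior)
  have "AE mu in prior K P. norm (f mu * lik h mu) \<le> 1"
    using AE_prior_unit_cube
  proof (rule eventually_mono)
    fix mu assume mu: "mu \<in> unit_cube K"
    then show "norm (f mu * lik h mu) \<le> 1"
      using assms lik_in_unit_cube[OF mu assms(2)]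
      by (auto simp: unit_bounded_def abs_mult intro: mult_le_one)
  qed
  then show ?thesis
    using assms by (intro integrable_const_bound[where B = 1]) (auto simp: unit_bounded_def)
qed

text \<open>The posterior expectation of \<open>f\<close> given the history \<open>h\<close>, multiplied by the marginal
  likelihood of \<open>h\<close>. These unnormalised integrals are linear in \<open>f\<close> and add up over the
  two possible outcomes of a new observation.\<close>

definition lik_integral :: "(nat \<times> bool) list \<Rightarrow> ((nat \<Rightarrow> real) \<Rightarrow> real) \<Rightarrow> real" where
  "lik_integral h f = (\<integral>mu. f mu * lik h mu \<partial>prior K P)"

lemma lik_integral_snoc_True: "lik_integral (h @ [(a, True)]) f = lik_integral h (\<lambda>mu. f mu * mu a)"
  by (simp add: lik_integral_def lik_snoc_True mult_ac)

lemma lik_integral_snoc_split: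
  assumes "f \<in> unit_bounded" "valid_history K h" "a < K"
  shows "lik_integral h f = lik_integral (h @ [(a, True)]) f + lik_integral (h @ [(a, False)]) f"
proof -
  have "f mu * lik h mu = f mu * lik (h @ [(a, True)]) mu + f mu * lik (h @ [(a, False)]) mu" for mu
    by (simp add: lik_snoc_True lik_snoc_False algebra_simps)
  then show ?thesis
    unfolding lik_integral_def using assms by (simp add: integrable_lik)
qed

lemma lik_integral_diff:
  assumes "f \<in> unit_bounded" "g \<in> unit_bounded" "valid_history K h"
  shows "lik_integral h (\<lambda>mu. f mu - g mu) = lik_integral h f - lik_integral h g"
  unfolding lik_integral_def left_diff_distrib using assms
  by (intro Bochner_Integration.integral_diff integrable_lik)

lemma lik_integral_cmult: "lik_integral h (\<lambda>mu. c * f mu) = c * lik_integral h f"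
  by (simp add: lik_integral_def mult.assoc)

lemma lik_integral_uminus: "lik_integral h (\<lambda>mu. - f mu) = - lik_integral h f"
  by (simp add: lik_integral_def)

lemma lik_integral_sum:
  assumes "\<And>a. a \<in> A \<Longrightarrow> f a \<in> unit_bounded" "valid_history K h"
  shows "lik_integral h (\<lambda>mu. \<Sum>a\<in>A. f a mu) = (\<Sum>a\<in>A. lik_integral h (f a))"
  unfolding lik_integral_def sum_distrib_right using assms
  by (intro Bochner_Integration.integral_sum integrable_lik)

lemma lik_integral_nonneg:
  assumes "valid_history K h" "\<And>mu. mu \<in> unit_cube K \<Longrightarrow> 0 \<le> f mu"
  shows "0 \<le> lik_integral h f"
  unfolding lik_integral_def using AE_prior_unit_cube
  by (intro integral_nonneg_AE, elim eventually_mono) (simp add: assms lik_in_unit_cube)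

lemma lik_integral_mono:
  assumes "f \<in> unit_bounded" "g \<in> unit_bounded" "valid_history K h"
    and "\<And>mu. mu \<in> unit_cube K \<Longrightarrow> f mu \<le> g mu"
  shows "lik_integral h f \<le> lik_integral h g"
  unfolding lik_integral_def using AE_prior_unit_cube
  by (intro integral_mono_AE integrable_lik assms, elim eventually_mono)
     (simp add: assms mult_right_mono lik_in_unit_cube)

lemma abs_lik_integral_le:
  assumes "f \<in> unit_bounded" "valid_history K h"
  shows "\<bar>lik_integral h f\<bar> \<le> lik_integral h (\<lambda>_. 1)"
proof -
  have "lik_integral h g \<le> lik_integral h (\<lambda>_. 1)" if "g \<in> unit_bounded" for g
    using that assms(2) by (intro lik_integral_mono unit_bounded_const) (auto simp: unit_bounded_def)
  from this[OF assms(1)] this[OF unit_bounded_uminus[OF assms(1)]] show ?thesis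
    by (simp add: lik_integral_uminus)
qed

lemma lik_integral_factor:
  assumes a: "a < K" and h: "valid_history K h"
    and H: "H \<in> unit_bounded" and H_upd: "\<And>mu y. H (mu(a := y)) = H mu"
    and phi: "phi \<in> borel_measurable borel" "\<And>y. 0 \<le> y \<Longrightarrow> y \<le> 1 \<Longrightarrow> \<bar>phi y\<bar> \<le> 1"
  shows "lik_integral h (\<lambda>mu. H mu * phi (mu a)) =
    (\<integral>mu. H mu * lik (filter (\<lambda>ar. fst ar \<noteq> a) h) mu \<partial>PiM ({..<K} - {a}) P_ext) *
    (\<integral>y. phi y * lik (filter (\<lambda>ar. fst ar = a) h) (\<lambda>_. y) \<partial>P a)"
proof -
  interpret product_prob_space P_ext
    by (rule product_prob_space_P_ext)
  define I where "I = {..<K} - {a}"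
  define hA where "hA = filter (\<lambda>ar. fst ar = a) h"
  define hB where "hB = filter (\<lambda>ar. fst ar \<noteq> a) h"
  have insert_I: "insert a I = {..<K}"
    using a by (auto simp: I_def)
  have "(\<lambda>mu. phi (mu a)) \<in> unit_bounded"
    using a phi measurable_compose[OF measurable_coord phi(1)]
    by (auto simp: unit_bounded_def unit_cube_def)
  with H have integrable: "integrable (PiM (insert a I) P_ext) (\<lambda>mu. H mu * phi (mu a) * lik h mu)"
    unfolding insert_I prior_eq_PiM_P_ext[symmetric] by (intro integrable_lik unit_bounded_mult h)
  have inner: "(\<integral>y. H (x(a := y)) * phi ((x(a := y)) a) * lik h (x(a := y)) \<partial>P_ext a) =
      H x * lik hB x * (\<integral>y. phi y * lik hA (\<lambda>_. y) \<partial>P a)" for x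
  proof -
    have "H (x(a := y)) * phi ((x(a := y)) a) * lik h (x(a := y)) =
        H x * lik hB x * (phi y * lik hA (\<lambda>_. y))" for y
      by (simp add: H_upd lik_fun_upd hA_def hB_def)
    then show ?thesis
      by (simp only: integral_mult_right_zero P_ext_eq[OF a])
  qed
  have "lik_integral h (\<lambda>mu. H mu * phi (mu a)) = (\<integral>mu. H mu * phi (mu a) * lik h mu \<partial>PiM (insert a I) P_ext)"
    unfolding lik_integral_def insert_I prior_eq_PiM_P_ext ..
  also have "\<dots> = (\<integral>x. (\<integral>y. H (x(a := y)) * phi ((x(a := y)) a) * lik h (x(a := y)) \<partial>P_ext a) \<partial>PiM I P_ext)"
    using integrable by (intro product_integral_insert) (auto simp: I_def)
  also have "\<dots> = (\<integral>x. H x * lik hB x \<partial>PiM I P_ext) * (\<integral>y. phi y * lik hA (\<lambda>_. y) \<partial>P a)"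
    by (simp only: inner integral_mult_left_zero)
  finally show ?thesis
    unfolding I_def hA_def hB_def .
qed

text \<open>\<open>coord_cov a h F\<close> is the posterior covariance of \<open>F\<close> and \<open>mu a\<close> given \<open>h\<close>, scaled by the
  squared marginal likelihood of \<open>h\<close>.\<close>

definition coord_cov :: "nat \<Rightarrow> (nat \<times> bool) list \<Rightarrow> ((nat \<Rightarrow> real) \<Rightarrow> real) \<Rightarrow> real" where
  "coord_cov a h F = lik_integral h (\<lambda>mu. F mu * mu a) * lik_integral h (\<lambda>_. 1) -
     lik_integral h F * lik_integral h (\<lambda>mu. mu a)"

lemma coord_cov_eq_0:
  assumes a: "a < K" and h: "valid_history K h"
    and H: "H \<in> unit_bounded" and H_upd: "\<And>mu y. H (mu(a := y)) = H mu"
  shows "coord_cov a h H = 0"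
proof -
  define integral_rest where "integral_rest H' =
    (\<integral>mu. H' mu * lik (filter (\<lambda>ar. fst ar \<noteq> a) h) mu \<partial>PiM ({..<K} - {a}) P_ext)" for H'
  define integral_arm where "integral_arm phi =
    (\<integral>y. phi y * lik (filter (\<lambda>ar. fst ar = a) h) (\<lambda>_. y) \<partial>P a)" for phi
  have factor: "lik_integral h (\<lambda>mu. H' mu * phi (mu a)) = integral_rest H' * integral_arm phi"
    if "H' \<in> unit_bounded" "\<And>mu y. H' (mu(a := y)) = H' mu" "phi \<in> {\<lambda>_. 1, \<lambda>y. y}" for H' phi
    unfolding integral_rest_def integral_arm_def using that
    by (intro lik_integral_factor[OF a h]) auto
  have one: "(\<lambda>_. 1) \<in> unit_bounded"
    by (simp add: unit_bounded_const)
  show ?thesis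
    using factor[where H' = H and phi = "\<lambda>y. y", OF H H_upd]
      factor[where H' = H and phi = "\<lambda>_. 1", OF H H_upd]
      factor[where H' = "\<lambda>_. 1" and phi = "\<lambda>y. y", OF one]
      factor[where H' = "\<lambda>_. 1" and phi = "\<lambda>_. 1", OF one]
    by (simp add: coord_cov_def)
qed

text \<open>A conditional Chebyshev (Harris) inequality. Freezing \<open>mu a\<close> at its posterior mean \<open>m\<close>
  turns \<open>F\<close> into a function \<open>F_m\<close> uncorrelated with \<open>mu a\<close>, and
  \<open>(F - F_m) * (mu a - m) \<ge> 0\<close> pointwise by monotonicity.\<close>

lemma coord_cov_nonneg:
  assumes a: "a < K" and h: "valid_history K h" and F: "F \<in> unit_bounded"
    and F_mono: "\<And>mu. mono (\<lambda>y. F (mu(a := y)))"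
  shows "0 \<le> coord_cov a h F"
proof -
  define z where "z = lik_integral h (\<lambda>_. 1)"
  define l where "l = lik_integral h (\<lambda>mu. mu a)"
  have coord: "(\<lambda>mu. mu a) \<in> unit_bounded" and one: "(\<lambda>_. 1) \<in> unit_bounded"
    using a by (simp_all add: unit_bounded_coord unit_bounded_const)
  have "0 \<le> l" "l \<le> z"
    unfolding l_def z_def using a
    by (auto intro!: lik_integral_nonneg lik_integral_mono h coord one simp: unit_cube_def)
  then consider "z = 0" "l = 0" | "0 < z"
    by linarith
  then show ?thesis
  proof cases
    case 1
    then show ?thesis
      by (simp add: coord_cov_def z_def l_def)
  next
    case 2
    define m where "m = l / z"
    have "0 \<le> m" "m \<le> 1"
      using \<open>0 \<le> l\<close> \<open>l \<le> z\<close> 2 by (simp_all add: m_def)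
    define F_m where "F_m mu = F (mu(a := m))" for mu
    have F_m: "F_m \<in> unit_bounded"
      unfolding F_m_def using F a \<open>0 \<le> m\<close> \<open>m \<le> 1\<close> by (rule unit_bounded_fun_upd)
    have centred: "lik_integral h (\<lambda>mu. G mu * (mu a - m)) =
        lik_integral h (\<lambda>mu. G mu * mu a) - m * lik_integral h G" if G: "G \<in> unit_bounded" for G
    proof -
      have "(\<lambda>mu. m * G mu) \<in> unit_bounded"
        using \<open>0 \<le> m\<close> \<open>m \<le> 1\<close> G by (intro unit_bounded_mult unit_bounded_const) auto
      then show ?thesis
        using lik_integral_diff[OF unit_bounded_mult[OF G coord] _ h]
        by (simp add: right_diff_distrib mult.commute lik_integral_cmult)
    qed
    have "coord_cov a h F_m = 0"
      using a h F_m by (rule coord_cov_eq_0) (simp add: F_m_def)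
    then have "lik_integral h (\<lambda>mu. F_m mu * mu a) * z = lik_integral h F_m * l"
      by (simp add: coord_cov_def z_def l_def)
    then have "0 = lik_integral h (\<lambda>mu. F_m mu * (mu a - m))"
      unfolding centred[OF F_m] using 2 by (simp add: m_def field_simps)
    also have "\<dots> \<le> lik_integral h (\<lambda>mu. F mu * (mu a - m))"
    proof (intro lik_integral_mono unit_bounded_mult unit_bounded_coord_minus_const F F_m h a
        \<open>0 \<le> m\<close> \<open>m \<le> 1\<close>)
      show "F_m mu * (mu a - m) \<le> F mu * (mu a - m)" for mu
        using mono_mult_diff_le[OF F_mono[of mu], where m = m and x = "mu a"] by (simp add: F_m_def)
    qed
    also have "\<dots> = (lik_integral h (\<lambda>mu. F mu * mu a) * z - lik_integral h F * l) / z"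
      unfolding centred[OF F] using 2 by (simp add: m_def field_simps)
    finally show ?thesis
      using 2 by (simp add: coord_cov_def z_def l_def zero_le_divide_iff)
  qed
qed

lemma coord_cov_nonpos:
  assumes "a < K" "valid_history K h" "F \<in> unit_bounded"
    and "\<And>mu. antimono (\<lambda>y. F (mu(a := y)))"
  shows "coord_cov a h F \<le> 0"
proof -
  have "(\<lambda>mu. - F mu) \<in> unit_bounded"
    using assms(3) by (rule unit_bounded_uminus)
  moreover have "mono (\<lambda>y. - F (mu(a := y)))" for mu
    using assms(4)[of mu] by (simp add: mono_def antimono_def)
  ultimately have "0 \<le> coord_cov a h (\<lambda>mu. - F mu)"
    using assms(1,2) by (intro coord_cov_nonneg)
  then show ?thesis
    by (simp add: coord_cov_def lik_integral_uminus)
qed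

lemma coord_cov_snoc:
  assumes "F \<in> unit_bounded" "valid_history K h" "a < K"
  shows "coord_cov a h F =
    lik_integral (h @ [(a, True)]) F * lik_integral (h @ [(a, False)]) (\<lambda>_. 1) -
    lik_integral (h @ [(a, False)]) F * lik_integral (h @ [(a, True)]) (\<lambda>_. 1)"
  using lik_integral_snoc_split[OF assms] lik_integral_snoc_split[OF unit_bounded_const assms(2,3), of 1]
    lik_integral_snoc_True[of h a F] lik_integral_snoc_True[of h a "\<lambda>_. 1"]
  by (simp add: coord_cov_def algebra_simps)

lemma coord_cov_best_arm_gain_nonneg:
  assumes i: "i < K" and j: "j < K" and a: "a < K" and h: "valid_history K h"
  shows "0 \<le> coord_cov a h (\<lambda>mu. of_bool (best_arm K mu = i)) * coord_cov a h (\<lambda>mu. mu i - mu j)"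
proof -
  have B: "(\<lambda>mu. of_bool (best_arm K mu = i)) \<in> unit_bounded"
    by (rule unit_bounded_best_arm)
  have G: "(\<lambda>mu. mu i - mu j) \<in> unit_bounded"
    using i j by (rule unit_bounded_coord_diff)
  consider "i = j" | "a = i" "i \<noteq> j" | "a = j" "i \<noteq> j" | "a \<noteq> i" "a \<noteq> j"
    by blast
  then show ?thesis
  proof cases
    case 1
    then show ?thesis
      by (simp add: coord_cov_def lik_integral_def)
  next
    case 2
    have "mono (\<lambda>y. of_bool (best_arm K (mu(a := y)) = i) :: real)" for mu
      using 2 i by (auto simp: mono_def intro: best_arm_fun_upd_self_mono)
    moreover have "mono (\<lambda>y. (mu(a := y)) i - (mu(a := y)) j)" for mu :: "nat \<Rightarrow> real"
      using 2 by (auto simp: mono_def)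
    ultimately show ?thesis
      using a h B G by (intro mult_nonneg_nonneg coord_cov_nonneg)
  next
    case 3
    have "antimono (\<lambda>y. of_bool (best_arm K (mu(a := y)) = i) :: real)" for mu
      using 3 i by (auto simp: antimono_def intro: best_arm_fun_upd_other_antimono)
    moreover have "antimono (\<lambda>y. (mu(a := y)) i - (mu(a := y)) j)" for mu :: "nat \<Rightarrow> real"
      using 3 by (auto simp: antimono_def)
    ultimately show ?thesis
      using a h B G by (intro mult_nonpos_nonpos coord_cov_nonpos)
  next
    case 4
    then have "coord_cov a h (\<lambda>mu. mu i - mu j) = 0"
      using a h G by (intro coord_cov_eq_0) auto
    then show ?thesis
      by simp
  qed
qed

lemma posterior_best_eq:
  "posterior_best K P h a = lik_integral h (\<lambda>mu. of_bool (best_arm K mu = a)) / lik_integral h (\<lambda>_. 1)"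
proof -
  have "(\<lambda>mu. if best_arm K mu = a then lik h mu else 0) = (\<lambda>mu. of_bool (best_arm K mu = a) * lik h mu)"
    by auto
  then show ?thesis
    by (simp add: posterior_best_def lik_integral_def)
qed

lemma posterior_gain_le_snoc:
  assumes i: "i < K" and j: "j < K" and a: "a < K" and h: "valid_history K h"
  shows "posterior_best K P h i * lik_integral h (\<lambda>mu. mu i - mu j) \<le>
    posterior_best K P (h @ [(a, True)]) i * lik_integral (h @ [(a, True)]) (\<lambda>mu. mu i - mu j) +
    posterior_best K P (h @ [(a, False)]) i * lik_integral (h @ [(a, False)]) (\<lambda>mu. mu i - mu j)"
proof -
  define B :: "(nat \<Rightarrow> real) \<Rightarrow> real" where "B = (\<lambda>mu. of_bool (best_arm K mu = i))"
  define G :: "(nat \<Rightarrow> real) \<Rightarrow> real" where "G = (\<lambda>mu. mu i - mu j)"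
  define h1 where "h1 = h @ [(a, True)]"
  define h0 where "h0 = h @ [(a, False)]"
  have B: "B \<in> unit_bounded" and G: "G \<in> unit_bounded" and one: "(\<lambda>_. 1) \<in> unit_bounded"
    unfolding B_def G_def using i j by (simp_all add: unit_bounded_best_arm unit_bounded_coord_diff unit_bounded_const)
  have h1: "valid_history K h1" and h0: "valid_history K h0"
    using h a by (simp_all add: h1_def h0_def)
  have split: "lik_integral h F = lik_integral h1 F + lik_integral h0 F" if "F \<in> unit_bounded" for F
    unfolding h1_def h0_def using that h a by (rule lik_integral_snoc_split)
  have "(lik_integral h1 B + lik_integral h0 B) / (lik_integral h1 (\<lambda>_. 1) + lik_integral h0 (\<lambda>_. 1)) *
      (lik_integral h1 G + lik_integral h0 G) \<le>
    lik_integral h1 B / lik_integral h1 (\<lambda>_. 1) * lik_integral h1 G +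
    lik_integral h0 B / lik_integral h0 (\<lambda>_. 1) * lik_integral h0 G"
  proof (rule ratio_mult_split_le)
    show "0 \<le> (lik_integral h1 B * lik_integral h0 (\<lambda>_. 1) - lik_integral h0 B * lik_integral h1 (\<lambda>_. 1)) *
        (lik_integral h1 G * lik_integral h0 (\<lambda>_. 1) - lik_integral h0 G * lik_integral h1 (\<lambda>_. 1))"
      using coord_cov_best_arm_gain_nonneg[OF i j a h, folded B_def G_def]
      unfolding coord_cov_snoc[OF B h a] coord_cov_snoc[OF G h a] h1_def h0_def .
  qed (use abs_lik_integral_le[OF B h1] abs_lik_integral_le[OF B h0]
        abs_lik_integral_le[OF G h1] abs_lik_integral_le[OF G h0] h1 h0 in
        \<open>auto intro!: lik_integral_nonneg simp: B_def\<close>)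
  then show ?thesis
    unfolding posterior_best_eq B_def[symmetric] G_def[symmetric] h1_def[symmetric] h0_def[symmetric]
      split[OF B] split[OF G] split[OF one] .
qed

subsection \<open>Thompson sampling\<close>

lemma posterior_best_nonneg: "valid_history K h \<Longrightarrow> 0 \<le> posterior_best K P h a"
  unfolding posterior_best_eq by (intro divide_nonneg_nonneg lik_integral_nonneg) auto

lemma sum_posterior_best:
  assumes "0 < K" "valid_history K h" "0 < lik_integral h (\<lambda>_. 1)"
  shows "(\<Sum>a<K. posterior_best K P h a) = 1"
proof -
  have "(\<Sum>a<K. of_bool (best_arm K mu = a) :: real) = 1" for mu
    using best_arm_less[OF assms(1), of mu] by (simp add: of_bool_def sum.delta)
  then have "(\<Sum>a<K. lik_integral h (\<lambda>mu. of_bool (best_arm K mu = a))) = lik_integral h (\<lambda>_. 1)"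
    using lik_integral_sum[where A = "{..<K}" and f = "\<lambda>a mu. of_bool (best_arm K mu = a)",
        OF unit_bounded_best_arm assms(2)]
    by simp
  then show ?thesis
    using assms(3) by (simp add: posterior_best_eq flip: sum_divide_distrib)
qed

lemma integral_prior_coord:
  assumes "i < K"
  shows "(\<integral>mu. mu i \<partial>prior K P) = (\<integral>x. x \<partial>P i)"
proof -
  have "(\<integral>x. x \<partial>P_ext i) = (\<integral>x. x \<partial>distr (PiM {..<K} P_ext) (P_ext i) (\<lambda>mu. mu i))"
    using assms prob_space_P_ext by (subst distr_PiM_component) auto
  also have "\<dots> = (\<integral>mu. mu i \<partial>PiM {..<K} P_ext)"
    using assms measurable_ident_sets[OF sets_P_ext[of i]] by (intro integral_distr) auto
  finally show ?thesis
    using assms by (simp add: prior_eq_PiM_P_ext P_ext_eq)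
qed

definition ts_choices_prob :: "(nat \<times> bool) list \<Rightarrow> real" where
  "ts_choices_prob h = (\<Prod>s<length h. posterior_best K P (take s h) (fst (h ! s)))"

lemma ts_hist_prob_eq: "ts_hist_prob K P mu h = ts_choices_prob h * lik h mu"
  unfolding ts_hist_prob_def ts_choices_prob_def lik_conv_nth prod.distrib ..

lemma ts_choices_prob_snoc: "ts_choices_prob (h @ [x]) = ts_choices_prob h * posterior_best K P h (fst x)"
proof -
  have "(\<Prod>s<length h. posterior_best K P (take s (h @ [x])) (fst ((h @ [x]) ! s))) =
      (\<Prod>s<length h. posterior_best K P (take s h) (fst (h ! s)))"
    by (rule prod.cong) (auto simp: nth_append)
  then show ?thesis
    by (simp add: ts_choices_prob_def)
qed

lemma ts_choices_prob_nonneg: "valid_history K h \<Longrightarrow> 0 \<le> ts_choices_prob h"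
  unfolding ts_choices_prob_def
  by (intro prod_nonneg posterior_best_nonneg) (auto simp: valid_history_def dest: in_set_takeD)

text \<open>\<open>ts_gain i j h\<close> is the expectation of \<open>mu i - mu j\<close> on the event that Thompson sampling
  produces the history \<open>h\<close> and then recommends \<open>i\<close>.\<close>

definition ts_gain :: "nat \<Rightarrow> nat \<Rightarrow> (nat \<times> bool) list \<Rightarrow> real" where
  "ts_gain i j h = ts_choices_prob h * posterior_best K P h i * lik_integral h (\<lambda>mu. mu i - mu j)"

lemma integral_gain_ts_rec_prob:
  assumes "i < K" "j < K"
  shows "(\<integral>mu. (mu i - mu j) * ts_rec_prob K P mu n i \<partial>prior K P) = (\<Sum>h\<in>histories K n. ts_gain i j h)"
proof -
  have "(\<lambda>mu. (mu i - mu j) * ts_rec_prob K P mu n i) = (\<lambda>mu. \<Sum>h\<in>histories K n.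
      ts_choices_prob h * posterior_best K P h i * ((mu i - mu j) * lik h mu))"
    unfolding ts_rec_prob_def ts_hist_prob_eq by (simp add: sum_distrib_left mult_ac)
  moreover have "integrable (prior K P) (\<lambda>mu. (mu i - mu j) * lik h mu)" if "h \<in> histories K n" for h
    using that assms by (intro integrable_lik unit_bounded_coord_diff) (simp_all add: histories_iff)
  ultimately show ?thesis
    by (simp add: ts_gain_def lik_integral_def)
qed

lemma ts_gain_le_snoc:
  assumes i: "i < K" and j: "j < K" and h: "valid_history K h"
  shows "ts_gain i j h \<le> (\<Sum>a<K. ts_gain i j (h @ [(a, True)]) + ts_gain i j (h @ [(a, False)]))"
proof (cases "lik_integral h (\<lambda>_. 1) = 0")
  case True
  \<comment> \<open>then every posterior given \<open>h\<close> is a division by zero, hence \<open>0\<close>\<close>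
  then show ?thesis
    by (simp add: ts_gain_def ts_choices_prob_snoc posterior_best_eq)
next
  case False
  then have z: "0 < lik_integral h (\<lambda>_. 1)"
    using lik_integral_nonneg[OF h, of "\<lambda>_. 1"] by simp
  define gain where "gain h' = posterior_best K P h' i * lik_integral h' (\<lambda>mu. mu i - mu j)" for h'
  have "ts_choices_prob h * gain h = ts_choices_prob h * (\<Sum>a<K. posterior_best K P h a * gain h)"
    using sum_posterior_best[OF _ h z] i by (simp flip: sum_distrib_right)
  also have "\<dots> \<le> ts_choices_prob h *
      (\<Sum>a<K. posterior_best K P h a * (gain (h @ [(a, True)]) + gain (h @ [(a, False)])))"
    using posterior_gain_le_snoc[OF i j _ h] posterior_best_nonneg[OF h] ts_choices_prob_nonneg[OF h]
    by (intro mult_left_mono sum_mono) (simp_all add: gain_def)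
  finally show ?thesis
    by (simp add: ts_gain_def gain_def ts_choices_prob_snoc sum_distrib_left algebra_simps)
qed

lemma sum_ts_gain_nonneg:
  assumes "i < K" "j < K" "(\<integral>x. x \<partial>P i) = (\<integral>x. x \<partial>P j)"
  shows "0 \<le> (\<Sum>h\<in>histories K n. ts_gain i j h)"
proof (induction n)
  case 0
  have "histories K 0 = {[]}"
    by (auto simp: histories_def)
  moreover have "lik_integral [] (\<lambda>mu. mu i - mu j) = 0"
    using lik_integral_diff[OF unit_bounded_coord unit_bounded_coord, of i j "[]"] assms
    by (simp add: lik_integral_def integral_prior_coord valid_history_def)
  ultimately show ?case
    by (simp add: ts_gain_def)
next
  case (Suc n)
  have "(\<Sum>h\<in>histories K n. ts_gain i j h) \<le> (\<Sum>h\<in>histories K (Suc n). ts_gain i j h)"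
    unfolding sum_histories_Suc using assms(1,2)
    by (intro sum_mono ts_gain_le_snoc) (simp_all add: histories_iff)
  with Suc show ?case
    by linarith
qed

end

theorem theorem3p5:
  fixes K :: nat and P :: "nat \<Rightarrow> real measure"
  assumes "\<And>i. i < K \<Longrightarrow> prob_space (P i)"
    and "\<And>i. i < K \<Longrightarrow> sets (P i) = sets borel"
    and "\<And>i. i < K \<Longrightarrow> (AE x in P i. 0 \<le> x \<and> x \<le> 1)"
    and "\<And>i j. i < K \<Longrightarrow> j < K \<Longrightarrow> (\<integral>x. x \<partial>P i) = (\<integral>x. x \<partial>P j)"
  shows "TS_BIC K P"
proof -
  interpret bandit_prior K P
    by (rule bandit_prior.intro) (fact assms)+
  show ?thesis
    unfolding TS_BIC_def
  proof (intro allI impI)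
    fix n i j
    assume i: "i < K" and j: "j < K" and pos: "0 < rec_prob K P n i"
    have "0 \<le> (\<integral>mu. (mu i - mu j) * ts_rec_prob K P mu n i \<partial>prior K P)"
      unfolding integral_gain_ts_rec_prob[OF i j] using i j assms(4)[OF i j] by (rule sum_ts_gain_nonneg)
    then show "0 \<le> cond_gain K P n i j"
      unfolding cond_gain_def using pos by simp
  qed
qed

end
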